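(* Let $w$ be a non-periodic $\mathcal{A}$-strict standard episturmian word on an alphabet $\mathcal{A}$ with $\delta(w)<\sqrt3$. Then $\mathcal{A}$ contains exactly two letters, and $w$ is a characteristic Sturmian word.
   Context: For a finite word $u$, $u^{(+)}$ denotes its right palindromic closure, the shortest palindrome having $u$ as a prefix. Given an infinite word $\Delta=\delta_1\delta_2\cdots$ on $\mathcal{A}$, the standard episturmian word with directive word $\Delta$ is the limit of the words $\pi_1=\varepsilon$, $\pi_{i+1}=(\pi_i\delta_i)^{(+)}$; it is $\mathcal{A}$-strict if every letter of $\mathcal{A}$ occurs infinitely many times in $\Delta$. For an infinite word $w$ with infinitely many palindromic prefixes (the empty word counting as one), $(n_i)_{i\ge1}$ is the increasing sequence of their lengths and $\delta(w)=\limsup n_{i+1}/n_i$. Characteristic Sturmian word on $\{a,b\}$ ($a\ne b$): for positive integers $s_1,s_2,\dots$, let $\sigma_0=a$, $\sigma_1=a^{s_1-1}b$, $\sigma_n=\sigma_{n-1}^{s_n}\sigma_{n-2}$ ($n\ge2$); the limit of the $\sigma_n$ is the characteristic Sturmian word of slope $[0;s_1,s_2,\dots]$. *)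

theory Defs
  imports Complex_Main "HOL-Library.Extended_Real" "HOL-Library.Infinite_Set" "HOL-Library.Sublist"
begin

(* Infinite words are functions nat => 'a (positions counted from 0);
   finite words are lists. *)

definition is_pal :: "'a list \<Rightarrow> bool" where
  "is_pal u \<longleftrightarrow> rev u = u"

definition rclos :: "'a list \<Rightarrow> 'a list" where
  "rclos u = (SOME p. prefix u p \<and> is_pal p \<and>
       (\<forall>q. prefix u q \<and> is_pal q \<longrightarrow> length p \<le> length q))"

(* pi_{i+1} in the paper is pis D i here: pis D 0 = epsilon = pi_1,
   pis D (Suc i) = (pis D i @ [D i])^(+), where D i = delta_{i+1} *)
primrec pis :: "(nat \<Rightarrow> 'a) \<Rightarrow> nat \<Rightarrow> 'a list" where
  "pis D 0 = []"
| "pis D (Suc i) = rclos (pis D i @ [D i])"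

definition iprefix :: "'a list \<Rightarrow> (nat \<Rightarrow> 'a) \<Rightarrow> bool" where
  "iprefix u w \<longleftrightarrow> (\<forall>j < length u. w j = u ! j)"

definition std_epi_dir :: "(nat \<Rightarrow> 'a) \<Rightarrow> (nat \<Rightarrow> 'a) \<Rightarrow> bool" where
  "std_epi_dir D w \<longleftrightarrow> (\<forall>i. iprefix (pis D i) w)"

definition strict_std_epi :: "'a set \<Rightarrow> (nat \<Rightarrow> 'a) \<Rightarrow> bool" where
  "strict_std_epi A w \<longleftrightarrow> (\<exists>D. (\<forall>n. D n \<in> A) \<and> (\<forall>a\<in>A. \<exists>\<^sub>\<infinity>n. D n = a) \<and> std_epi_dir D w)"

definition periodic_word :: "(nat \<Rightarrow> 'a) \<Rightarrow> bool" where
  "periodic_word w \<longleftrightarrow> (\<exists>p>0. \<forall>n. w (n + p) = w n)"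

definition pal_prefix_lengths :: "(nat \<Rightarrow> 'a) \<Rightarrow> nat set" where
  "pal_prefix_lengths w = {n. is_pal (map w [0..<n])}"

(* n_{i+1} of the paper is pal_len w i *)
definition pal_len :: "(nat \<Rightarrow> 'a) \<Rightarrow> nat \<Rightarrow> nat" where
  "pal_len w = enumerate (pal_prefix_lengths w)"

definition delta_pal :: "(nat \<Rightarrow> 'a) \<Rightarrow> ereal" where
  "delta_pal w = limsup (\<lambda>i. ereal (real (pal_len w (Suc i)) / real (pal_len w i)))"

(* sigma_n for the characteristic Sturmian word; s 1, s 2, ... are the s_i *)
fun sigma :: "'a \<Rightarrow> 'a \<Rightarrow> (nat \<Rightarrow> nat) \<Rightarrow> nat \<Rightarrow> 'a list" where
  "sigma a b s 0 = [a]"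
| "sigma a b s (Suc 0) = replicate (s 1 - 1) a @ [b]"
| "sigma a b s (Suc (Suc n)) =
     concat (replicate (s (Suc (Suc n))) (sigma a b s (Suc n))) @ sigma a b s n"

definition char_sturmian :: "'a \<Rightarrow> 'a \<Rightarrow> (nat \<Rightarrow> 'a) \<Rightarrow> bool" where
  "char_sturmian a b w \<longleftrightarrow> a \<noteq> b \<and>
     (\<exists>s. (\<forall>i\<ge>1. s i \<ge> 1) \<and> (\<forall>n\<ge>1. iprefix (sigma a b s n) w))"

end

theory Submission
  imports Defs
begin

text \<open>
  The palindromic prefixes of \<open>w\<close> are exactly the words \<open>\<pi> j\<close>, and their lengths
  \<open>n j\<close> obey Justin's formula: \<open>n (j+1) = 2 n j + 1\<close> if \<open>\<delta> j\<close> is a new letter, and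
  \<open>n (j+1) = 2 n j - n k\<close> if \<open>k\<close> is the previous occurrence of \<open>\<delta> j\<close>. Iterating it,
  the lengths \<open>n t\<close> over positions \<open>t\<close> that are last occurrences before \<open>j\<close> of
  distinct letters sum to at most \<open>n j\<close>. If three letters occur infinitely often, then
  infinitely often a letter returns at \<open>i\<close> after its last occurrence \<open>k\<close> while two
  other last occurrences lie strictly between \<open>k\<close> and \<open>i - 1\<close>; then
  \<open>4 n k \<le> n i + 1\<close>, so \<open>n (i+1) / n i = 2 - n k / n i \<ge> 7/4 - 1/(4 n i)\<close>, which
  exceeds \<open>\<surd>3\<close> once \<open>n i \<ge> 20\<close>.

  A single letter makes \<open>w\<close> periodic, so exactly two letters occur. Write
  \<open>\<pi> (j+1) = \<pi> j v j\<close>. The increments \<open>v\<close> are constant along the runs of the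
  directive word, and the palindromic closure gives \<open>v(run m+2) = v(run m) v(run m+1)\<^sup>s\<close>
  with \<open>s\<close> the length of run \<open>m+1\<close>: the mirror image of the recursion of \<open>\<sigma>\<close>.
  Reversed increments are prefixes of \<open>w\<close>, hence so are the \<open>\<sigma> n\<close>.
\<close>

section \<open>Palindromes and palindromic closure\<close>

lemma is_pal_Cons_snoc: "is_pal (c # q @ [d]) \<longleftrightarrow> c = d \<and> is_pal q"
  unfolding is_pal_def
  by (metis list.inject append1_eq_conv rev.simps(2) rev_append rev_singleton_conv append_Cons append_Nil)

lemma is_pal_append_split:
  assumes "is_pal (u @ y)" "length y \<le> length u"
  obtains s where "u = rev y @ s" "is_pal s"
proof -
  have "u @ y = rev y @ rev u" using assms(1) by (simp add: is_pal_def)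
  then obtain s where u: "u = rev y @ s" and "s @ y = rev u"
    using assms(2) by (auto simp: append_eq_append_conv2)
  then have "is_pal s" by (simp add: is_pal_def)
  with u show thesis by (rule that)
qed

lemma rclos_spec:
  "prefix u (rclos u) \<and> is_pal (rclos u) \<and>
   (\<forall>q. prefix u q \<and> is_pal q \<longrightarrow> length (rclos u) \<le> length q)"
proof -
  let ?P = "\<lambda>p. prefix u p \<and> is_pal p"
  have "?P (u @ rev u)" by (simp add: is_pal_def)
  then have "\<exists>p. prefix u p \<and> is_pal p \<and> (\<forall>q. ?P q \<longrightarrow> length p \<le> length q)"
    using ex_has_least_nat[of ?P _ length] by blast
  then show ?thesis unfolding rclos_def by (rule someI_ex)
qed

lemma rclos_prefix: "prefix u (rclos u)"
  using rclos_spec by blast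

lemma rclos_is_pal: "is_pal (rclos u)"
  using rclos_spec by blast

lemma length_rclos_le: "prefix u q \<Longrightarrow> is_pal q \<Longrightarrow> length (rclos u) \<le> length q"
  using rclos_spec by blast

lemma length_rclos_le_pal_suffix:
  assumes "suffix s u" "is_pal s"
  shows "length (rclos u) + length s \<le> 2 * length u"
proof -
  obtain x where u: "u = x @ s" using assms(1) by (auto simp: suffix_def)
  have "length (rclos u) \<le> length (x @ s @ rev x)"
    using assms(2) u by (intro length_rclos_le) (auto simp: is_pal_def)
  then show ?thesis using u by simp
qed

lemma prefix_map_upt:
  assumes "prefix u (map w [0..<N])"
  shows "u = map w [0..<length u]"
proof -
  have "length u \<le> N" using prefix_length_le[OF assms] by simp
  moreover have "u = take (length u) (map w [0..<N])" using assms by (auto simp: prefix_def)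
  ultimately show ?thesis by (simp add: take_map)
qed

lemma prefix_map_upt_mono: "a \<le> b \<Longrightarrow> prefix (map w [0..<a]) (map w [0..<b])"
  by (metis map_append prefix_def le_add_diff_inverse upt_add_eq_append zero_le)

lemma enumerate_range_strict_mono:
  fixes f :: "nat \<Rightarrow> nat"
  assumes "strict_mono f"
  shows "enumerate (range f) = f"
proof
  fix n
  have inf: "infinite (range f)"
    using assms finite_imageD infinite_UNIV_nat strict_mono_imp_inj_on by blast
  show "enumerate (range f) n = f n"
  proof (induction n)
    case 0
    have "(LEAST x. x \<in> range f) = f 0"
      by (rule Least_equality) (auto simp: strict_mono_less_eq[OF assms])
    then show ?case by (simp add: enumerate_0)
  next
    case (Suc n)
    have "enumerate (range f) (Suc n) = (LEAST s. s \<in> range f \<and> f n < s)"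
      using enumerate_Suc''[OF inf] Suc by simp
    also have "\<dots> = f (Suc n)"
      by (rule Least_equality) (auto simp: strict_mono_less[OF assms] strict_mono_less_eq[OF assms] Suc_le_eq)
    finally show ?case .
  qed
qed

lemma strict_mono_bracket:
  fixes f :: "nat \<Rightarrow> nat"
  assumes "strict_mono f" "f 0 = 0"
  obtains t where "f t \<le> m" "m < f (Suc t)"
proof -
  have "m < f (Suc m)"
    using strict_mono_imp_increasing[OF assms(1), of "Suc m"] by simp
  moreover have "\<not> m < f 0" using assms(2) by simp
  ultimately obtain t where "\<forall>i\<le>t. \<not> m < f i" "m < f (t + 1)"
    by (auto dest: ex_least_nat_less[of "\<lambda>t. m < f t"])
  then show thesis using that[of t] by (simp add: not_less)
qed

section \<open>The palindromic prefixes and Justin's formula\<close>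

definition last_before :: "(nat \<Rightarrow> 'a) \<Rightarrow> nat \<Rightarrow> nat \<Rightarrow> bool" where
  "last_before D t j \<longleftrightarrow> t < j \<and> (\<forall>s. t < s \<and> s < j \<longrightarrow> D s \<noteq> D t)"

lemma last_before_exists:
  assumes "t < j"
  obtains k where "t \<le> k" "D k = D t" "last_before D k j"
proof -
  let ?P = "\<lambda>k. k < j \<and> D k = D t"
  have "?P (Greatest ?P)" "t \<le> Greatest ?P"
    using GreatestI_nat[of ?P t j] Greatest_le_nat[of ?P t j] assms by auto
  moreover have "\<not> ?P s" if "Greatest ?P < s" for s
    using Greatest_le_nat[of ?P s j] that by auto
  ultimately show thesis
    by (intro that[of "Greatest ?P"]) (auto simp: last_before_def)
qed

lemma last_before_SucD:
  assumes "last_before D t (Suc j)" "t < j"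
  shows "last_before D t j" "D j \<noteq> D t"
  using assms by (auto simp: last_before_def)

locale std_episturmian =
  fixes D :: "nat \<Rightarrow> 'a" and w :: "nat \<Rightarrow> 'a"
  assumes std: "std_epi_dir D w"
begin

abbreviation len_pi :: "nat \<Rightarrow> nat" where
  "len_pi j \<equiv> length (pis D j)"

lemma pis_is_pal: "is_pal (pis D j)"
  by (cases j) (simp_all add: is_pal_def rclos_is_pal[unfolded is_pal_def])

lemma pis_snoc_prefix: "prefix (pis D j @ [D j]) (pis D (Suc j))"
  by (simp add: rclos_prefix)

lemma pis_eq_map: "pis D j = map w [0..<len_pi j]"
  using std by (intro nth_equalityI) (auto simp: std_epi_dir_def iprefix_def)

lemma prefix_pis_eq_map: "prefix u (pis D j) \<Longrightarrow> u = map w [0..<length u]"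
  by (metis pis_eq_map prefix_map_upt)

lemma strict_mono_len_pi: "strict_mono len_pi"
  unfolding strict_mono_Suc_iff
  by (metis pis_snoc_prefix prefix_length_le length_append_singleton Suc_le_eq)

lemma w_len_pi: "w (len_pi j) = D j"
proof -
  have "pis D j @ [D j] = map w [0..<Suc (len_pi j)]"
    using prefix_pis_eq_map[OF pis_snoc_prefix] by simp
  then show ?thesis by (metis nth_append_length nth_map_upt lessI diff_zero add_0)
qed

lemma pal_prefix_length_eq_len_pi:
  assumes "is_pal (map w [0..<m])"
  obtains t where "m = len_pi t"
proof -
  obtain t where t: "len_pi t \<le> m" "m < len_pi (Suc t)"
    by (rule strict_mono_bracket[OF strict_mono_len_pi]) simp_all
  show thesis
  proof (cases "m = len_pi t")
    case False
    have "Suc (len_pi t) \<le> m" using t(1) False by simp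
    then have "prefix (map w [0..<Suc (len_pi t)]) (map w [0..<m])"
      by (rule prefix_map_upt_mono)
    then have "prefix (pis D t @ [D t]) (map w [0..<m])"
      using prefix_pis_eq_map[OF pis_snoc_prefix[of t]] by (simp del: pis.simps upt_Suc)
    then have "length (rclos (pis D t @ [D t])) \<le> length (map w [0..<m])"
      using assms by (rule length_rclos_le)
    with t(2) show thesis by simp
  qed (rule that)
qed

lemma pal_len_eq_len_pi: "pal_len w = len_pi"
proof -
  have "pal_prefix_lengths w = range len_pi"
    using pis_is_pal pis_eq_map
    by (auto simp: pal_prefix_lengths_def elim: pal_prefix_length_eq_len_pi)
  then show ?thesis
    by (simp add: pal_len_def enumerate_range_strict_mono[OF strict_mono_len_pi])
qed

lemma pis_prefix_mono: "a \<le> b \<Longrightarrow> prefix (pis D a) (pis D b)"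
  by (metis pis_eq_map prefix_map_upt_mono strict_mono_len_pi strict_mono_less_eq)

lemma pal_suffix_pis_snoc:
  assumes "suffix s (pis D j @ [D j])" "is_pal s" "2 \<le> length s"
  obtains t where "t < j" "D t = D j" "length s = len_pi t + 2"
proof -
  obtain c r where "s = c # r" "r \<noteq> []" using assms(3) by (cases s) (auto simp: Suc_le_eq)
  then obtain q d where s: "s = c # q @ [d]" by (metis rev_exhaust)
  obtain x where x: "pis D j @ [D j] = x @ s" using assms(1) by (auto simp: suffix_def)
  have d: "d = D j" using x s by simp
  have "c = d" "is_pal q" using assms(2) unfolding s is_pal_Cons_snoc by simp_all
  then have q: "rev q = q" "c = D j" using d by (simp_all add: is_pal_def)
  have pj: "pis D j = x @ D j # q" using x s q(2) d by simp
  have "pis D j = rev (pis D j)" using pis_is_pal[of j] by (simp add: is_pal_def)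
  also have "\<dots> = q @ D j # rev x" using pj q(1) by simp
  finally have "q @ [D j] = map w [0..<Suc (length q)]"
    using prefix_pis_eq_map[of "q @ [D j]" j] by (simp add: prefix_def)
  then have pal: "is_pal (map w [0..<length q])" and wq: "w (length q) = D j"
    using q(1) by (simp_all add: is_pal_def)
  obtain t where t: "length q = len_pi t" by (rule pal_prefix_length_eq_len_pi[OF pal])
  have "D t = D j" using w_len_pi[of t] t wq by simp
  moreover have "len_pi t < len_pi j" using pj t by simp
  then have "t < j" using strict_mono_less[OF strict_mono_len_pi] by blast
  ultimately show thesis using s t by (intro that) simp_all
qed

lemma len_pi_Suc_cases:
  "2 * len_pi j + 1 \<le> len_pi (Suc j) \<or>
   (\<exists>t<j. D t = D j \<and> len_pi (Suc j) + len_pi t = 2 * len_pi j)"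
proof -
  obtain y where py: "pis D (Suc j) = (pis D j @ [D j]) @ y"
    using pis_snoc_prefix prefixE by metis
  then have len: "len_pi (Suc j) = Suc (len_pi j) + length y"
    by (metis length_append length_append_singleton)
  show ?thesis
  proof (cases "length y \<le> length (pis D j @ [D j])")
    case False
    with len show ?thesis by simp
  next
    case True
    have "is_pal ((pis D j @ [D j]) @ y)" using pis_is_pal[of "Suc j"] unfolding py .
    then obtain s where us: "pis D j @ [D j] = rev y @ s" and "is_pal s"
      using True by (rule is_pal_append_split)
    then have "suffix s (pis D j @ [D j])" by (simp add: suffix_def)
    have ls: "length s + length y = Suc (len_pi j)" using arg_cong[OF us, of length] by simp
    show ?thesis
    proof (cases "2 \<le> length s")
      case True
      then obtain t where "t < j" "D t = D j" "length s = len_pi t + 2"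
        using pal_suffix_pis_snoc \<open>suffix s _\<close> \<open>is_pal s\<close> by blast
      then show ?thesis using ls len by auto
    next
      case False
      then show ?thesis using ls len by simp
    qed
  qed
qed

lemma len_pi_Suc_le: "len_pi (Suc j) \<le> 2 * len_pi j + 1"
proof -
  have "suffix [D j] (pis D j @ [D j])" "is_pal [D j]" by (simp_all add: is_pal_def)
  then have "length (rclos (pis D j @ [D j])) + 1 \<le> 2 * (len_pi j + 1)"
    using length_rclos_le_pal_suffix by fastforce
  then show ?thesis by simp
qed

lemma len_pi_Suc_new:
  assumes "\<forall>t<j. D t \<noteq> D j"
  shows "len_pi (Suc j) = 2 * len_pi j + 1"
  using len_pi_Suc_cases[of j] len_pi_Suc_le[of j] assms by auto

lemma len_pi_Suc_return:
  assumes "last_before D t j" "D t = D j"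
  shows "len_pi (Suc j) + len_pi t = 2 * len_pi j"
proof -
  have "t < j" using assms(1) by (simp add: last_before_def)
  then have "prefix (pis D t @ [D t]) (pis D j)"
    using pis_snoc_prefix[of t] pis_prefix_mono[of "Suc t" j] by (metis Suc_leI prefix_order.trans)
  then obtain z where z: "pis D j = pis D t @ [D t] @ z" by (auto simp: prefix_def)
  have "pis D j = rev (pis D j)" using pis_is_pal[of j] by (simp add: is_pal_def)
  also have "\<dots> = rev z @ [D t] @ pis D t" using z pis_is_pal[of t] by (simp add: is_pal_def)
  finally have "suffix ([D j] @ pis D t @ [D j]) (pis D j @ [D j])"
    using assms(2) by (metis append.assoc suffixI)
  moreover have "is_pal ([D j] @ pis D t @ [D j])"
    using pis_is_pal[of t] by (simp add: is_pal_Cons_snoc)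
  ultimately have upper: "len_pi (Suc j) + (len_pi t + 2) \<le> 2 * (len_pi j + 1)"
    using length_rclos_le_pal_suffix by fastforce
  have "2 * len_pi j \<le> len_pi (Suc j) + len_pi t"
  proof (cases "2 * len_pi j + 1 \<le> len_pi (Suc j)")
    case False
    then obtain t' where t': "t' < j" "D t' = D j" "len_pi (Suc j) + len_pi t' = 2 * len_pi j"
      using len_pi_Suc_cases by blast
    have "t' \<le> t" using assms t' by (metis last_before_def not_le)
    then have "len_pi t' \<le> len_pi t" using strict_mono_less_eq[OF strict_mono_len_pi] by blast
    then show ?thesis using t' by simp
  qed simp
  then show ?thesis using upper by simp
qed

end

section \<open>Three letters force \<open>\<delta>(w) \<ge> \<surd>3\<close>\<close>

lemma sqrt3_le_ratio:
  fixes A B K :: nat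
  assumes "4 * K \<le> A + 1" "B + K = 2 * A" "20 \<le> A"
  shows "sqrt 3 \<le> real B / real A"
proof -
  have "sqrt 3 \<le> 139 / 80"
    by (rule real_le_lsqrt) (auto simp: power2_eq_square)
  moreover have "139 / 80 * real A \<le> real B" using assms by linarith
  ultimately have "sqrt 3 * real A \<le> real B"
    by (smt (verit) mult_right_mono of_nat_0_le_iff)
  then show ?thesis using assms(3) by (simp add: field_simps)
qed

lemma last_completed_letter:
  fixes D :: "nat \<Rightarrow> 'a"
  assumes "finite L" "L \<noteq> {}" "\<forall>x\<in>L. \<exists>n\<ge>t0. D n = x"
  obtains i where "t0 \<le> i" "D i \<in> L" "D i \<notin> D ` {t0..<i}" "L - {D i} \<subseteq> D ` {t0..<i}"
proof -
  define m where "m = (LEAST m. L \<subseteq> D ` {t0..<m})"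
  obtain f where f: "\<forall>x\<in>L. t0 \<le> f x \<and> D (f x) = x" using assms(3) by metis
  have "f x \<in> {t0..<Suc (Max (f ` L))}" if "x \<in> L" for x
    using f that assms(1) by (simp add: le_imp_less_Suc)
  then have "L \<subseteq> D ` {t0..<Suc (Max (f ` L))}" using f by (metis image_eqI subsetI)
  then have covered: "L \<subseteq> D ` {t0..<m}" unfolding m_def by (rule LeastI)
  have "t0 < m"
  proof (rule ccontr)
    assume "\<not> t0 < m"
    then show False using covered assms(2) by simp
  qed
  then obtain i where m: "m = Suc i" and t0i: "t0 \<le> i" by (metis less_imp_Suc_add le_add1)
  have "\<not> L \<subseteq> D ` {t0..<i}" using not_less_Least[of i "\<lambda>m. L \<subseteq> D ` {t0..<m}"] m m_def by simp
  moreover have "{t0..<Suc i} = insert i {t0..<i}" using t0i by auto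
  ultimately show thesis using covered m t0i by (intro that) auto
qed

lemma last_before_between:
  assumes "k < a" "a < i" "k < b" "b < i" "D a \<noteq> D b"
  obtains c where "k < c" "Suc c < i" "last_before D c i"
proof -
  obtain a' where a': "a \<le> a'" "D a' = D a" "last_before D a' i"
    using last_before_exists[OF assms(2)] by blast
  obtain b' where b': "b \<le> b'" "D b' = D b" "last_before D b' i"
    using last_before_exists[OF assms(4)] by blast
  have "a' \<noteq> b'" using a' b' assms(5) by auto
  then consider "a' \<noteq> i - 1" | "b' \<noteq> i - 1" by blast
  then show thesis
  proof cases
    case 1
    then show thesis using a' assms(1) by (intro that[of a']) (auto simp: last_before_def)
  next
    case 2
    then show thesis using b' assms(3) by (intro that[of b']) (auto simp: last_before_def)
  qed
qed

lemma three_letters_return: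
  fixes D :: "nat \<Rightarrow> 'a"
  assumes "finite L" "3 \<le> card L" "\<forall>x\<in>L. \<exists>\<^sub>\<infinity>n. D n = x"
  obtains k c i where "N \<le> i" "last_before D k i" "D k = D i" "last_before D c i" "k < c" "Suc c < i"
proof -
  have "L \<noteq> {}" using assms(2) by auto
  have "\<forall>x\<in>L. \<exists>n. D n = x" using assms(3) INFM_EX by blast
  then obtain g where g: "\<forall>x\<in>L. D (g x) = x" by metis
  \<comment> \<open>Every letter of \<open>L\<close> occurs before \<open>t0\<close>, so the letter completed last after \<open>t0\<close>
    returns there from an occurrence before \<open>t0\<close>.\<close>
  define t0 where "t0 = Suc (N + Max (g ` L))"
  have g_t0: "g x < t0" if "x \<in> L" for x
  proof -
    have "g x \<le> Max (g ` L)" using that assms(1) by simp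
    then show ?thesis by (simp add: t0_def)
  qed
  have "\<forall>x\<in>L. \<exists>n\<ge>t0. D n = x" using assms(3) by (simp add: INFM_nat_le)
  with assms(1) \<open>L \<noteq> {}\<close> obtain i
    where i: "t0 \<le> i" "D i \<in> L" "D i \<notin> D ` {t0..<i}" "L - {D i} \<subseteq> D ` {t0..<i}"
    by (rule last_completed_letter)
  have "g (D i) < i" using g_t0[OF i(2)] i(1) by simp
  then obtain k where k: "D k = D i" "last_before D k i"
    using last_before_exists g i(2) by metis
  have "k < t0"
  proof (rule ccontr)
    assume "\<not> k < t0"
    then have "k \<in> {t0..<i}" using k(2) by (simp add: last_before_def)
    then show False using k(1) i(3) by (metis image_eqI)
  qed
  have "2 \<le> card (L - {D i})" using assms(1,2) i(2) by (simp add: card_Diff_singleton)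
  then obtain u v where "u \<in> L - {D i}" "v \<in> L - {D i}" "u \<noteq> v"
    by (auto simp: numeral_2_eq_2 card_le_Suc_iff)
  then obtain a b where ab: "a \<in> {t0..<i}" "b \<in> {t0..<i}" "D a \<noteq> D b"
    using i(4) by (metis imageE subsetD)
  then have "k < a" "a < i" "k < b" "b < i" using \<open>k < t0\<close> by auto
  then obtain c where "k < c" "Suc c < i" "last_before D c i"
    using ab(3) by (rule last_before_between)
  moreover have "N \<le> i" using i(1) by (simp add: t0_def)
  ultimately show thesis using k that by blast
qed

context std_episturmian
begin

lemma sum_len_pi_last_before_le:
  "\<forall>t\<in>T. last_before D t j \<Longrightarrow> (\<Sum>t\<in>T. len_pi t) \<le> len_pi j"
proof (induction j arbitrary: T)
  case 0
  then have "T = {}" by (auto simp: last_before_def)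
  then show ?case by simp
next
  case (Suc j)
  have fin: "finite T" using Suc.prems by (auto simp: last_before_def intro: finite_subset[of T "{..<Suc j}"])
  show ?case
  proof (cases "j \<in> T")
    case False
    then have "\<forall>t\<in>T. t < j" using Suc.prems by (auto simp: last_before_def less_Suc_eq)
    then have "(\<Sum>t\<in>T. len_pi t) \<le> len_pi j" using Suc.prems by (intro Suc.IH) (blast dest: last_before_SucD)
    also have "\<dots> \<le> len_pi (Suc j)" using strict_mono_len_pi by (simp add: strict_mono_Suc_iff less_imp_le)
    finally show ?thesis .
  next
    case True
    define T' where "T' = T - {j}"
    have sum_T: "(\<Sum>t\<in>T. len_pi t) = len_pi j + (\<Sum>t\<in>T'. len_pi t)"
      using True fin by (simp add: T'_def sum.remove)
    have "\<forall>t\<in>T'. t < j" using Suc.prems by (auto simp: T'_def last_before_def less_Suc_eq)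
    then have T': "\<forall>t\<in>T'. last_before D t j \<and> D j \<noteq> D t"
      using Suc.prems by (auto simp: T'_def dest: last_before_SucD)
    show ?thesis
    proof (cases "\<exists>t<j. D t = D j")
      case True
      \<comment> \<open>\<open>j\<close> is traded for the previous occurrence \<open>k\<close> of its letter; Justin's formula pays for it.\<close>
      then obtain k where k: "D k = D j" "last_before D k j"
        by (metis last_before_exists)
      then have "k \<notin> T'" using T' by auto
      moreover have "(\<Sum>t\<in>insert k T'. len_pi t) \<le> len_pi j" using k T' by (intro Suc.IH) auto
      ultimately have "len_pi k + (\<Sum>t\<in>T'. len_pi t) \<le> len_pi j"
        using fin by (simp add: T'_def)
      moreover have "len_pi (Suc j) + len_pi k = 2 * len_pi j" using len_pi_Suc_return k by simp
      ultimately show ?thesis using sum_T by linarith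
    next
      case False
      then have "len_pi (Suc j) = 2 * len_pi j + 1" by (intro len_pi_Suc_new) blast
      moreover have "(\<Sum>t\<in>T'. len_pi t) \<le> len_pi j" using T' by (intro Suc.IH) blast
      ultimately show ?thesis using sum_T by linarith
    qed
  qed
qed

lemma four_len_pi_le:
  assumes "last_before D k i" "last_before D c i" "k < c" "Suc c < i"
  shows "4 * len_pi k \<le> len_pi i + 1"
proof -
  obtain i' where i: "i = Suc i'" using assms(4) by (cases i) auto
  have "last_before D i' i" by (auto simp: i last_before_def)
  then have "(\<Sum>t\<in>{k, c, i'}. len_pi t) \<le> len_pi i"
    using assms by (intro sum_len_pi_last_before_le) auto
  moreover have "(\<Sum>t\<in>{k, c, i'}. len_pi t) = len_pi k + len_pi c + len_pi i'"
    using assms(3,4) i by simp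
  moreover have "len_pi k \<le> len_pi c"
    using assms(3) strict_mono_less_eq[OF strict_mono_len_pi] by (simp del: pis.simps)
  moreover have "len_pi i \<le> 2 * len_pi i' + 1" using len_pi_Suc_le i by blast
  ultimately show ?thesis by linarith
qed

lemma sqrt3_le_len_pi_ratio:
  assumes "last_before D k i" "D k = D i" "last_before D c i" "k < c" "Suc c < i" "20 \<le> i"
  shows "sqrt 3 \<le> real (len_pi (Suc i)) / real (len_pi i)"
proof (rule sqrt3_le_ratio)
  show "4 * len_pi k \<le> len_pi i + 1" using assms(1,3-5) by (rule four_len_pi_le)
  show "len_pi (Suc i) + len_pi k = 2 * len_pi i" using assms(1,2) by (rule len_pi_Suc_return)
  show "20 \<le> len_pi i" using assms(6) strict_mono_imp_increasing[OF strict_mono_len_pi, of i] by linarith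
qed

lemma delta_pal_ge_sqrt3:
  assumes "finite L" "3 \<le> card L" "\<forall>x\<in>L. \<exists>\<^sub>\<infinity>n. D n = x"
  shows "ereal (sqrt 3) \<le> delta_pal w"
proof (rule ccontr)
  let ?ratio = "\<lambda>i. real (len_pi (Suc i)) / real (len_pi i)"
  assume "\<not> ereal (sqrt 3) \<le> delta_pal w"
  then have "\<forall>\<^sub>F i in sequentially. ereal (?ratio i) < ereal (sqrt 3)"
    by (intro Limsup_lessD) (simp add: delta_pal_def pal_len_eq_len_pi)
  then obtain N where N: "\<And>i. N \<le> i \<Longrightarrow> ?ratio i < sqrt 3"
    by (auto simp: eventually_sequentially)
  obtain k c i where "max N 20 \<le> i" "last_before D k i" "D k = D i" "last_before D c i" "k < c" "Suc c < i"
    using three_letters_return[OF assms] by blast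
  then have "sqrt 3 \<le> ?ratio i" "?ratio i < sqrt 3"
    using sqrt3_le_len_pi_ratio N by simp_all
  then show False by simp
qed

end

section \<open>Two letters: the characteristic Sturmian word\<close>

primrec run_start :: "(nat \<Rightarrow> 'a) \<Rightarrow> nat \<Rightarrow> nat" where
  "run_start D 0 = 0"
| "run_start D (Suc m) = (LEAST j. run_start D m < j \<and> D j \<noteq> D (run_start D m))"

declare run_start.simps(2) [simp del]

lemma run_start_Suc:
  assumes "\<forall>i. \<exists>j>i. D j \<noteq> D i"
  shows "run_start D m < run_start D (Suc m) \<and> D (run_start D (Suc m)) \<noteq> D (run_start D m)"
proof -
  have "\<exists>j. run_start D m < j \<and> D j \<noteq> D (run_start D m)" using assms by blast
  then show ?thesis unfolding run_start.simps(2) by (rule LeastI_ex)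
qed

lemma run_start_const:
  assumes "run_start D m \<le> j" "j < run_start D (Suc m)"
  shows "D j = D (run_start D m)"
proof (cases "j = run_start D m")
  case False
  then show ?thesis
    using assms not_less_Least[of j "\<lambda>j. run_start D m < j \<and> D j \<noteq> D (run_start D m)"]
    by (auto simp: run_start.simps(2))
qed simp

lemma strict_mono_run_start:
  assumes "\<forall>i. \<exists>j>i. D j \<noteq> D i"
  shows "strict_mono (run_start D)"
  using run_start_Suc[OF assms] by (simp add: strict_mono_Suc_iff)

context std_episturmian
begin

definition pis_tail :: "nat \<Rightarrow> 'a list" where
  "pis_tail j = drop (len_pi j) (pis D (Suc j))"

lemma pis_Suc_eq_append_tail: "pis D (Suc j) = pis D j @ pis_tail j"
proof -
  obtain z where "pis D (Suc j) = (pis D j @ [D j]) @ z"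
    using pis_snoc_prefix prefixE by metis
  then show ?thesis unfolding pis_tail_def by simp
qed

lemma iprefix_rev_pis_tail: "iprefix (rev (pis_tail j)) w"
proof -
  have "pis D (Suc j) = rev (pis D (Suc j))" using pis_is_pal[of "Suc j"] by (simp add: is_pal_def)
  also have "\<dots> = rev (pis_tail j) @ rev (pis D j)" using pis_Suc_eq_append_tail[of j] by simp
  finally have "prefix (rev (pis_tail j)) (pis D (Suc j))" by (metis prefixI)
  then have "rev (pis_tail j) = map w [0..<length (pis_tail j)]"
    using prefix_pis_eq_map by fastforce
  then show ?thesis by (simp add: iprefix_def)
qed

lemma pis_eq_append_concat_tail: "t \<le> j \<Longrightarrow> pis D j = pis D t @ concat (map pis_tail [t..<j])"
proof (induction j rule: dec_induct)
  case (step j)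
  then show ?case using pis_Suc_eq_append_tail[of j] by simp
qed simp

lemma pis_tail_new:
  assumes "\<forall>t<j. D t \<noteq> D j"
  shows "pis_tail j = D j # pis D j"
proof -
  obtain y where y: "pis D (Suc j) = (pis D j @ [D j]) @ y"
    using pis_snoc_prefix prefixE by metis
  then have "len_pi (Suc j) = Suc (len_pi j) + length y"
    by (metis length_append length_append_singleton)
  then have ly: "length y = len_pi j" using len_pi_Suc_new[OF assms] by simp
  have "is_pal ((pis D j @ [D j]) @ y)" using pis_is_pal[of "Suc j"] unfolding y .
  then obtain s where s: "pis D j @ [D j] = rev y @ s"
    by (rule is_pal_append_split) (simp add: ly)
  have "length (pis D j) = length (rev y)" using ly by simp
  then have "pis D j = rev y" using s append_eq_append_conv by blast
  then have "y = rev (pis D j)" by (metis rev_rev_ident)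
  also have "\<dots> = pis D j" using pis_is_pal[of j] by (simp add: is_pal_def)
  finally show ?thesis using y pis_Suc_eq_append_tail[of j] by simp
qed

lemma pis_tail_return:
  assumes "last_before D t j" "D t = D j"
  shows "pis_tail j = concat (map pis_tail [t..<j])"
proof -
  have app: "pis D (Suc j) = pis D j @ pis_tail j" by (rule pis_Suc_eq_append_tail)
  then have "len_pi (Suc j) = len_pi j + length (pis_tail j)" by (metis length_append)
  then have lt: "length (pis_tail j) + len_pi t = len_pi j"
    using len_pi_Suc_return[OF assms] by linarith
  have "is_pal (pis D j @ pis_tail j)" using pis_is_pal[of "Suc j"] unfolding app .
  then obtain s where s: "pis D j = rev (pis_tail j) @ s" "is_pal s"
    by (rule is_pal_append_split) (use lt in linarith)
  have "pis D j = rev (pis D j)" using pis_is_pal[of j] by (simp add: is_pal_def)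
  also have "\<dots> = rev s @ pis_tail j" using s(1) by simp
  also have "rev s = s" using s(2) by (simp add: is_pal_def)
  finally have "pis_tail j = drop (length s) (pis D j)" by (metis append_eq_conv_conj)
  moreover have "length s = len_pi t" using arg_cong[OF s(1), of length] lt by simp
  moreover have "t < j" using assms(1) by (simp add: last_before_def)
  ultimately show ?thesis using pis_eq_append_concat_tail[of t j] by simp
qed

lemma pis_tail_Suc_same:
  assumes "D (Suc j) = D j"
  shows "pis_tail (Suc j) = pis_tail j"
proof -
  have "last_before D j (Suc j)" by (auto simp: last_before_def)
  then have "pis_tail (Suc j) = concat (map pis_tail [j..<Suc j])"
    using assms by (intro pis_tail_return) simp_all
  then show ?thesis by simp
qed

lemma pis_tail_0: "pis_tail 0 = [D 0]"
  using pis_tail_new[of 0] by simp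

lemma periodic_word_if_constant:
  assumes "\<forall>n. D n = a"
  shows "periodic_word w"
proof -
  have tail: "pis_tail j = [a]" for j
  proof (induction j)
    case 0
    have "D 0 = a" using assms by simp
    then show ?case using pis_tail_0 by simp
  next
    case (Suc j)
    have "D (Suc j) = D j" using assms by simp
    then show ?case using Suc pis_tail_Suc_same by simp
  qed
  have "len_pi j = j" for j
    by (induction j) (simp_all add: pis_Suc_eq_append_tail tail del: pis.simps(2))
  then have "w j = D j" for j using w_len_pi[of j] by simp
  then have "w j = a" for j using assms by simp
  then show ?thesis unfolding periodic_word_def by (intro exI[of _ 1]) simp
qed

lemma pis_tail_run_const:
  assumes "run_start D m \<le> j" "j < run_start D (Suc m)"
  shows "pis_tail j = pis_tail (run_start D m)"
  using assms
proof (induction j rule: dec_induct)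
  case (step j)
  have "j < run_start D (Suc m)" using step.prems by simp
  then have IH: "pis_tail j = pis_tail (run_start D m)" and "D j = D (run_start D m)"
    using step.IH run_start_const[OF step.hyps(1)] by blast+
  moreover have "D (Suc j) = D (run_start D m)"
    using run_start_const[OF le_SucI[OF step.hyps(1)] step.prems] .
  ultimately show ?case using pis_tail_Suc_same[of j] by simp
qed simp

lemma pis_tail_run_start_1:
  assumes "\<forall>i. \<exists>j>i. D j \<noteq> D i"
  shows "pis_tail (run_start D 1) = D (run_start D 1) # replicate (run_start D 1) (D 0)"
proof -
  let ?c = "run_start D 1"
  have first_run: "D t = D 0" "pis_tail t = [D 0]" if "t < ?c" for t
    using that run_start_const[of D 0 t] pis_tail_run_const[of 0 t] by (simp_all add: pis_tail_0)
  have "D ?c \<noteq> D 0" using run_start_Suc[OF assms, of 0] by simp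
  then have "\<forall>t<?c. D t \<noteq> D ?c" using first_run(1) by metis
  then have "pis_tail ?c = D ?c # pis D ?c" by (rule pis_tail_new)
  also have "pis D ?c = concat (map pis_tail [0..<?c])" using pis_eq_append_concat_tail[of 0 ?c] by simp
  also have "map pis_tail [0..<?c] = map (\<lambda>_. [D 0]) [0..<?c]"
    by (rule map_cong) (simp_all add: first_run(2))
  finally show ?thesis by (simp add: map_replicate_const)
qed

lemma pis_tail_run_start_Suc_Suc:
  assumes "\<forall>i. \<exists>j>i. D j \<noteq> D i" "D (run_start D (Suc (Suc m))) = D (run_start D m)"
  shows "pis_tail (run_start D (Suc (Suc m))) =
    pis_tail (run_start D m) @
    concat (replicate (run_start D (Suc (Suc m)) - run_start D (Suc m)) (pis_tail (run_start D (Suc m))))"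
proof -
  let ?c = "run_start D"
  define t where "t = ?c (Suc m) - 1"
  have c: "?c m < ?c (Suc m)" "?c (Suc m) < ?c (Suc (Suc m))" "D (?c (Suc (Suc m))) \<noteq> D (?c (Suc m))"
    using run_start_Suc[OF assms(1)] by auto
  then have t: "?c m \<le> t" "t < ?c (Suc m)" "[t..<?c (Suc (Suc m))] = t # [?c (Suc m)..<?c (Suc (Suc m))]"
    by (auto simp: t_def upt_conv_Cons)
  have Dt: "D t = D (?c (Suc (Suc m)))" using run_start_const[OF t(1,2)] assms(2) by simp
  have "D s \<noteq> D t" if "t < s" "s < ?c (Suc (Suc m))" for s
  proof -
    have "?c (Suc m) \<le> s" using that(1) by (simp add: t_def)
    then have "D s = D (?c (Suc m))" using run_start_const that(2) by blast
    then show ?thesis using c(3) Dt by simp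
  qed
  then have "last_before D t (?c (Suc (Suc m)))" using c t(2) by (auto simp: last_before_def)
  then have "pis_tail (?c (Suc (Suc m))) = concat (map pis_tail [t..<?c (Suc (Suc m))])"
    using Dt by (intro pis_tail_return) simp_all
  also have "\<dots> = pis_tail t @ concat (map pis_tail [?c (Suc m)..<?c (Suc (Suc m))])"
    by (simp add: t(3) del: upt_Suc)
  also have "map pis_tail [?c (Suc m)..<?c (Suc (Suc m))] =
      map (\<lambda>_. pis_tail (?c (Suc m))) [?c (Suc m)..<?c (Suc (Suc m))]"
    by (rule map_cong) (auto intro: pis_tail_run_const)
  also have "pis_tail t = pis_tail (?c m)" using t(1,2) by (rule pis_tail_run_const)
  finally show ?thesis by (simp add: map_replicate_const)
qed

lemma char_sturmian_if_two_letters: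
  assumes "a \<noteq> b" "\<forall>n. D n \<in> {a, b}" "D 0 = a" "\<exists>\<^sub>\<infinity>n. D n = a" "\<exists>\<^sub>\<infinity>n. D n = b"
  shows "char_sturmian a b w"
proof -
  let ?c = "run_start D"
  have nonconst: "\<forall>i. \<exists>j>i. D j \<noteq> D i"
  proof
    fix i
    have "\<exists>j>i. D j = a" "\<exists>j>i. D j = b" using assms(4,5) by (simp_all add: INFM_nat)
    then show "\<exists>j>i. D j \<noteq> D i" using assms(1) by metis
  qed
  have alternate: "D (?c (Suc (Suc m))) = D (?c m)" for m
  proof -
    have "D (?c k) \<in> {a, b}" for k using assms(2) by blast
    then show ?thesis using run_start_Suc[OF nonconst, of m] run_start_Suc[OF nonconst, of "Suc m"]
      by (metis insertE singletonD)
  qed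
  have c1: "D (?c 1) = b" using run_start_Suc[OF nonconst, of 0] assms(2,3) by auto
  \<comment> \<open>\<open>s (Suc m)\<close> is the length of run \<open>m\<close>, shifted by one for \<open>m = 0\<close> since \<open>\<sigma> 1 = a\<^bsup>s 1 - 1\<^esup> b\<close>.\<close>
  define s where "s i = (if i = 1 then Suc (?c 1) else ?c i - ?c (i - 1))" for i
  have s_pos: "\<forall>i\<ge>1. 1 \<le> s i"
  proof (intro allI impI)
    fix i :: nat
    assume "1 \<le> i"
    then have "?c (i - 1) < ?c i" using strict_mono_run_start[OF nonconst] by (simp add: strict_mono_def)
    then show "1 \<le> s i" by (simp add: s_def Suc_le_eq)
  qed
  have sigma_eq: "sigma a b s m = rev (pis_tail (?c m))" for m
  proof (induction m rule: sigma.induct[of "\<lambda>_ _ _ m. sigma a b s m = rev (pis_tail (?c m))" a b s])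
    case 1
    then show ?case using pis_tail_0 assms(3) by simp
  next
    case 2
    then show ?case using pis_tail_run_start_1[OF nonconst] c1 assms(3) by (simp add: s_def)
  next
    case (3 _ _ _ m)
    then show ?case
      using pis_tail_run_start_Suc_Suc[OF nonconst alternate] by (simp add: s_def rev_concat)
  qed
  have "iprefix (sigma a b s n) w" for n
    using sigma_eq iprefix_rev_pis_tail by simp
  then show ?thesis unfolding char_sturmian_def using assms(1) s_pos by blast
qed

end

theorem corollary7p4:
  fixes A :: "'a set" and w :: "nat \<Rightarrow> 'a"
  assumes "strict_std_epi A w"
    and "\<not> periodic_word w"
    and "delta_pal w < ereal (sqrt 3)"
  shows "card A = 2 \<and> (\<exists>a b. A = {a, b} \<and> char_sturmian a b w)"
proof -
  obtain D where DA: "\<forall>n. D n \<in> A" and Dinf: "\<forall>a\<in>A. \<exists>\<^sub>\<infinity>n. D n = a"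
    and "std_epi_dir D w"
    using assms(1) unfolding strict_std_epi_def by blast
  then interpret std_episturmian D w by unfold_locales
  define a where "a = D 0"
  obtain b where b: "b \<in> A" "b \<noteq> a"
    using periodic_word_if_constant assms(2) DA by blast
  have "A = {a, b}"
  proof (rule ccontr)
    assume "A \<noteq> {a, b}"
    then obtain x where "x \<in> A" "x \<noteq> a" "x \<noteq> b" using DA a_def b by blast
    then have "ereal (sqrt 3) \<le> delta_pal w"
      using Dinf DA a_def b by (intro delta_pal_ge_sqrt3[of "{a, x, b}"]) auto
    then show False using assms(3) by simp
  qed
  moreover have "char_sturmian a b w"
    using DA Dinf b \<open>A = {a, b}\<close> by (intro char_sturmian_if_two_letters) (auto simp: a_def)
  ultimately show ?thesis using b(2) by auto
qed

end
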